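(* Let $n\geq 3$ be an integer and put $m=2^{n-1}$. Let $G_2(n)=\{0,1,\dots,2^n-1\}$ be the gyrogroup with operation $\oplus$ and gyroautomorphisms $\mathrm{gyr}$ defined in the context below. Then $G_2(n)$ is gyrocommutative, i.e. $a\oplus b=\mathrm{gyr}[a,b](b\oplus a)$ for all $a,b\in G_2(n)$.
   Context: Setup: $n\ge 3$, $m=2^{n-1}$, $G_2(n)=\{0,1,\dots,2^n-1\}$, $P(n)=\{0,\dots,m-1\}$, $H(n)=\{m,\dots,2^n-1\}$; $O_P,E_P$ are the odd/even elements of $P(n)$, $O_H,E_H$ the odd/even elements of $H(n)$. For $i,j\in G_2(n)$ let $t,s\in P(n)$ with $t\equiv i+j\pmod m$, $s\equiv i+j+\frac m2\pmod m$, and set $i\oplus j=t$ if $(i,j)\in (P(n)\times P(n))\cup\big[(H(n)\times H(n))\setminus(E_H\times O_H)\big]$; $i\oplus j=t+m$ if $(i,j)\in (P(n)\times H(n))\cup\big[(H(n)\times P(n))\setminus(E_H\times O_P)\big]$; $i\oplus j=s$ if $(i,j)\in E_H\times O_H$; $i\oplus j=s+m$ if $(i,j)\in E_H\times O_P$. Let $A\colon G_2(n)\to G_2(n)$ be $A(i)=r$ if $i\in O_P$, $A(i)=r+m$ if $i\in O_H$, $A(i)=i$ otherwise, where $r\in P(n)$, $r\equiv i+\frac m2\pmod m$. Let $M=[O_P\times(O_H\cup E_H)]\cup[O_H\times(O_P\cup E_H)]\cup[E_H\times(O_P\cup O_H)]$, and define $\mathrm{gyr}[a,b]=A$ if $(a,b)\in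 M$ and $\mathrm{gyr}[a,b]=I$ (identity map) otherwise. With these, $(G_2(n),\oplus)$ is a gyrogroup (identity $0$, $a\oplus(b\oplus c)=(a\oplus b)\oplus\mathrm{gyr}[a,b](c)$, $\mathrm{gyr}[a,b]=\mathrm{gyr}[a\oplus b,b]$, each $\mathrm{gyr}[a,b]$ an automorphism). *)

theory Defs
  imports Main
begin

definition gm :: "nat \<Rightarrow> nat" where "gm n = 2 ^ (n - 1)"

definition G2 :: "nat \<Rightarrow> nat set" where "G2 n = {..< 2 ^ n}"
definition PP :: "nat \<Rightarrow> nat set" where "PP n = {..< gm n}"
definition HH :: "nat \<Rightarrow> nat set" where "HH n = {gm n ..< 2 ^ n}"

definition OP :: "nat \<Rightarrow> nat set" where "OP n = {i \<in> PP n. odd i}"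
definition EP :: "nat \<Rightarrow> nat set" where "EP n = {i \<in> PP n. even i}"
definition OH :: "nat \<Rightarrow> nat set" where "OH n = {i \<in> HH n. odd i}"
definition EH :: "nat \<Rightarrow> nat set" where "EH n = {i \<in> HH n. even i}"

definition gplus :: "nat \<Rightarrow> nat \<Rightarrow> nat \<Rightarrow> nat" where
  "gplus n i j =
    (let m = gm n; t = (i + j) mod m; s = (i + j + m div 2) mod m in
     if (i, j) \<in> EH n \<times> OH n then s
     else if (i, j) \<in> EH n \<times> OP n then s + m
     else if (i, j) \<in> (PP n \<times> PP n) \<union> (HH n \<times> HH n) then t
     else t + m)"

definition gA :: "nat \<Rightarrow> nat \<Rightarrow> nat" where
  "gA n i = (let m = gm n; r = (i + m div 2) mod m in
     if i \<in> OP n then r else if i \<in> OH n then r + m else i)"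

definition gM :: "nat \<Rightarrow> (nat \<times> nat) set" where
  "gM n = (OP n \<times> (OH n \<union> EH n)) \<union> (OH n \<times> (OP n \<union> EH n)) \<union> (EH n \<times> (OP n \<union> OH n))"

definition ggyr :: "nat \<Rightarrow> nat \<Rightarrow> nat \<Rightarrow> nat \<Rightarrow> nat" where
  "ggyr n a b = (if (a, b) \<in> gM n then gA n else id)"

end

(*
  Write m = 2^(n-1) and h = m/2.  Every sum splits as
    a \<oplus> b = (a + b + \<tau>(a,b)) mod m + (m if a, b lie in different halves, else 0),
  where the twist \<tau>(a,b) is h for a \<in> E_H, b odd, and 0 otherwise; and gyr[a,b]
  maps r + e (r < m, e \<in> {0,m}) to (r + h) mod m + e exactly when (a,b) \<in> M and r is odd.
  Swapping a and b only swaps the twists, and (a,b) \<in> M with a + b odd holds exactly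
  when one of \<tau>(a,b), \<tau>(b,a) is h; as h + h = m, the two twists then differ by h modulo m,
  which is the shift applied by the gyration.  Since n \<ge> 3, h is even, so the low part
  of b \<oplus> a has the parity of a + b.
*)
theory Submission
  imports Defs
begin

definition gtwist :: "nat \<Rightarrow> nat \<Rightarrow> nat \<Rightarrow> nat" where
  "gtwist n a b = (if a \<in> EH n \<and> odd b then gm n div 2 else 0)"

lemma two_power_eq_double_gm: "1 \<le> n \<Longrightarrow> 2 ^ n = 2 * gm n"
  unfolding gm_def by (cases n) auto

lemma four_dvd_gm:
  assumes "3 \<le> n" shows "4 dvd gm n"
proof -
  have "n - 1 = (n - 3) + 2" using assms by simp
  then have "gm n = 2 ^ (n - 3) * 4"
    unfolding gm_def by (simp add: power_add)
  then show ?thesis by simp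
qed

lemma even_gm: "2 \<le> n \<Longrightarrow> even (gm n)"
  unfolding gm_def by (cases "n - 1") auto

lemma mem_G2_iff: "1 \<le> n \<Longrightarrow> x \<in> G2 n \<longleftrightarrow> x < 2 * gm n"
  unfolding G2_def by (simp add: two_power_eq_double_gm)

lemma mem_HH_iff: "1 \<le> n \<Longrightarrow> x \<in> HH n \<longleftrightarrow> gm n \<le> x \<and> x < 2 * gm n"
  unfolding HH_def by (simp add: two_power_eq_double_gm)

lemma gplus_eq:
  assumes "1 \<le> n" "a \<in> G2 n" "b \<in> G2 n"
  shows "gplus n a b =
    (a + b + gtwist n a b) mod gm n + (if (a < gm n) = (b < gm n) then 0 else gm n)"
  using assms
  unfolding gplus_def gtwist_def EH_def OH_def OP_def PP_def Let_def
  by (auto simp: mem_G2_iff mem_HH_iff)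

lemma gA_add_eq:
  assumes "2 \<le> n" "r < gm n" "e \<in> {0, gm n}"
  shows "gA n (r + e) = (r + (if odd r then gm n div 2 else 0)) mod gm n + e"
proof -
  have "1 \<le> n" using assms(1) by simp
  moreover have "odd (r + e) \<longleftrightarrow> odd r" using assms(3) even_gm[OF assms(1)] by auto
  moreover have "(r + gm n + k) mod gm n = (r + k) mod gm n" for k
    by (metis add.commute add.left_commute mod_add_self2)
  ultimately show ?thesis
    using assms unfolding gA_def OP_def OH_def PP_def Let_def
    by (auto simp: mem_HH_iff)
qed

lemma ggyr_add_eq:
  assumes "2 \<le> n" "r < gm n" "e \<in> {0, gm n}"
  shows "ggyr n a b (r + e) =
    (r + (if (a, b) \<in> gM n \<and> odd r then gm n div 2 else 0)) mod gm n + e"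
  using gA_add_eq[OF assms] assms(2) unfolding ggyr_def by auto

lemma gM_odd_sum_iff:
  assumes "a \<in> G2 n" "b \<in> G2 n"
  shows "(a, b) \<in> gM n \<and> odd (a + b) \<longleftrightarrow> (a \<in> EH n \<and> odd b) \<or> (b \<in> EH n \<and> odd a)"
proof -
  have "gm n \<le> 2 ^ n" unfolding gm_def by (simp add: power_increasing)
  then have "G2 n = PP n \<union> HH n" unfolding G2_def PP_def HH_def by auto
  then show ?thesis using assms unfolding gM_def OP_def OH_def EH_def by auto
qed

lemma gtwist_swap:
  assumes "2 \<le> n" "a \<in> G2 n" "b \<in> G2 n"
  shows "(a + b + gtwist n b a + (if (a, b) \<in> gM n \<and> odd (a + b) then gm n div 2 else 0)) mod gm n
    = (a + b + gtwist n a b) mod gm n"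
proof -
  have "gm n div 2 + gm n div 2 = gm n" using even_gm[OF assms(1)] by auto
  then have m: "(x + gm n div 2 + gm n div 2) mod gm n = x mod gm n" for x
    by (metis add.assoc mod_add_self2)
  have "\<not> (a \<in> EH n \<and> odd b \<and> b \<in> EH n \<and> odd a)" unfolding EH_def by auto
  then show ?thesis
    using gM_odd_sum_iff[OF assms(2,3)] m unfolding gtwist_def by (auto simp flip: add.assoc)
qed

lemma even_gtwist:
  assumes "3 \<le> n" shows "even (gtwist n a b)"
proof -
  obtain k where "gm n = 4 * k" using four_dvd_gm[OF assms] ..
  then show ?thesis unfolding gtwist_def by simp
qed

theorem mainTheorem3:
  fixes n :: nat
  assumes "n \<ge> 3"
  shows "\<forall>a \<in> G2 n. \<forall>b \<in> G2 n. gplus n a b = ggyr n a b (gplus n b a)"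
proof (intro ballI)
  fix a b assume a: "a \<in> G2 n" and b: "b \<in> G2 n"
  define m where "m = gm n"
  define r where "r = (a + b + gtwist n b a) mod m"
  define e where "e = (if (a < m) = (b < m) then 0 else m)"
  have n: "1 \<le> n" "2 \<le> n" using assms by auto
  have "even m" using even_gm[OF n(2)] by (simp add: m_def)
  have "m > 0" unfolding m_def gm_def by simp
  have "gplus n b a = r + e"
    using gplus_eq[OF n(1) b a] by (auto simp: r_def e_def m_def add.commute)
  moreover have "odd r \<longleftrightarrow> odd (a + b)"
    using \<open>even m\<close> even_gtwist[OF assms] by (auto simp: r_def dvd_mod_iff)
  ultimately have "ggyr n a b (gplus n b a) =
      (r + (if (a, b) \<in> gM n \<and> odd (a + b) then m div 2 else 0)) mod m + e"
    using ggyr_add_eq[OF n(2)] \<open>m > 0\<close> by (simp add: r_def e_def m_def)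
  also have "\<dots> = (a + b + gtwist n a b) mod m + e"
    by (simp only: r_def m_def mod_add_left_eq gtwist_swap[OF n(2) a b])
  also have "\<dots> = gplus n a b"
    using gplus_eq[OF n(1) a b] by (simp add: e_def m_def)
  finally show "gplus n a b = ggyr n a b (gplus n b a)" ..
qed

end
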